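(* Let $G=(\mathcal{S},\mathcal{A})$ be a finite directed acyclic graph with a unique state $s_0\in\mathcal{S}$ having no incoming edges, and let $\mathcal{X}\subseteq\mathcal{S}$ be the set of states with no outgoing edges (terminal states), so that every $s\in\mathcal{S}\setminus\mathcal{X}$ has at least one child. Let $R:\mathcal{X}\to(0,\infty)$ be a reward function. Let $F:\mathcal{S}\to(0,\infty)$ be a state flow function, and for each non-terminal state $s\in\mathcal{S}\setminus\mathcal{X}$ let $A(\cdot\mid s)$ be a probability distribution on the children of $s$, i.e. $A(s'\mid s)\ge 0$ for $(s\to s')\in\mathcal{A}$ and $\sum_{s':(s\to s')\in\mathcal{A}}A(s'\mid s)=1$. Define, for every state $s'\neq s_0$, the Bifurcated GFlowNet loss $$\mathcal{L}_{\mathrm{BN}}(s')=\Big(\log\sum_{s:(s\to s')\in\mathcal{A}}F(s)A(s'\mid s)-\log T(s')\Big)^2,$$ where $T(s')=F(s')$ if $s'\notin\mathcal{X}$ and $T(s')=R(s')$ if $s'\in\mathcal{X}$. Suppose $\mathcal{L}_{\mathrm{BN}}(s')=0$ for all states $s'\neq s_0$. Then, for the Markov chain that starts at $s_0$ and, at each non-terminal state $s$, moves to a child $s'$ with probability $A(s'\mid s)$ until it reaches a terminal state, the probability of terminating at $x\in\mathcal{X}$ equals $R(x)/\sum_{y\in\mathcal{X}}R(y)$; that is, the policy $A$ samples terminal states proportionally to the reward.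
   Context: Here $(s\to s')\in\mathcal{A}$ denotes a directed edge (action) from $s$ to $s'$; $s$ is then a parent of $s'$ and $s'$ a child of $s$. The quantity $F(s)A(s'\mid s)$ is interpreted as the edge flow $F(s\to s')$, so the loss condition says that the total inflow into each non-initial, non-terminal state equals its state flow, and the total inflow into each terminal state equals its reward. *)

theory Defs
  imports Complex_Main
begin

definition terminals :: "'a set \<Rightarrow> ('a \<times> 'a) set \<Rightarrow> 'a set" where
  "terminals S E = {s \<in> S. \<forall>t. (s, t) \<notin> E}"

definition inflow :: "('a \<times> 'a) set \<Rightarrow> ('a \<Rightarrow> real) \<Rightarrow> ('a \<Rightarrow> 'a \<Rightarrow> real) \<Rightarrow> 'a \<Rightarrow> real" where
  "inflow E F A s' = (\<Sum>s\<in>{s. (s, s') \<in> E}. F s * A s s')"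

definition bn_loss ::
  "'a set \<Rightarrow> ('a \<times> 'a) set \<Rightarrow> ('a \<Rightarrow> real) \<Rightarrow> ('a \<Rightarrow> real) \<Rightarrow> ('a \<Rightarrow> 'a \<Rightarrow> real) \<Rightarrow> 'a \<Rightarrow> real" where
  "bn_loss S E R F A s' =
     (ln (inflow E F A s') - ln (if s' \<in> terminals S E then R s' else F s')) ^ 2"

definition paths :: "('a \<times> 'a) set \<Rightarrow> 'a \<Rightarrow> 'a \<Rightarrow> 'a list set" where
  "paths E a b = {xs. xs \<noteq> [] \<and> hd xs = a \<and> last xs = b \<and>
                      (\<forall>i < length xs - 1. (xs ! i, xs ! Suc i) \<in> E)}"

definition path_prob :: "('a \<Rightarrow> 'a \<Rightarrow> real) \<Rightarrow> 'a list \<Rightarrow> real" where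
  "path_prob A xs = (\<Prod>i < length xs - 1. A (xs ! i) (xs ! Suc i))"

text \<open>Probability that the Markov chain started at s0 with transition kernel A
  (absorbed at terminal states) terminates at x: sum over all paths s0 \<leadsto> x of
  the product of transition probabilities.\<close>
definition term_prob :: "('a \<times> 'a) set \<Rightarrow> ('a \<Rightarrow> 'a \<Rightarrow> real) \<Rightarrow> 'a \<Rightarrow> 'a \<Rightarrow> real" where
  "term_prob E A s0 x = (\<Sum>p\<in>paths E s0 x. path_prob A p)"

end

theory Submission
  imports Defs
begin

text \<open>
  A zero loss at every non-initial state says that the edge flows F(s) A(s'|s) form a flow
  network: the inflow of every inner state is its state flow F and the inflow of a terminal x
  is R x, while, since A(-|s) sums to one, the outflow of every inner state is F as well.
  Counting every edge flow once at its head and once at its tail shows that the total reward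
  equals F s0. On the other hand, decomposing each path from s0 to s by its last edge shows,
  by well-founded induction along the acyclic edge relation, that the probability of reaching
  s, times F s0, equals the inflow of s. At a terminal x this is R x, and dividing by
  F s0, the total reward, gives the claim.
\<close>

lemma path_nth_trancl:
  assumes "\<forall>k < length xs - 1. (xs ! k, xs ! Suc k) \<in> E" "i < j" "j < length xs"
  shows "(xs ! i, xs ! j) \<in> E\<^sup>+"
  using assms(2,3)
proof (induction j)
  case 0
  then show ?case by simp
next
  case (Suc j)
  have edge: "(xs ! j, xs ! Suc j) \<in> E" using assms(1) Suc.prems by auto
  show ?case
  proof (cases "i = j")
    case True
    then show ?thesis using edge by auto
  next
    case False
    then have "(xs ! i, xs ! j) \<in> E\<^sup>+" using Suc by auto
    then show ?thesis using edge by (rule trancl_into_trancl)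
  qed
qed

lemma paths_distinct:
  assumes "acyclic E" "xs \<in> paths E a b"
  shows "distinct xs"
proof -
  have "\<forall>k < length xs - 1. (xs ! k, xs ! Suc k) \<in> E"
    using assms(2) by (simp add: paths_def)
  then show ?thesis
    unfolding distinct_conv_nth by (metis acyclic_def assms(1) linorder_neqE_nat path_nth_trancl)
qed

lemma paths_subset:
  assumes "E \<subseteq> S \<times> S" "xs \<in> paths E a b"
  shows "set xs \<subseteq> insert a S"
proof
  fix x assume "x \<in> set xs"
  then obtain i where i: "i < length xs" "x = xs ! i" by (auto simp: in_set_conv_nth)
  have xs: "xs \<noteq> []" "hd xs = a" "\<forall>k < length xs - 1. (xs ! k, xs ! Suc k) \<in> E"
    using assms(2) by (auto simp: paths_def)
  show "x \<in> insert a S"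
  proof (cases i)
    case 0
    then show ?thesis using i xs by (simp add: hd_conv_nth)
  next
    case (Suc k)
    then have "(xs ! k, xs ! i) \<in> E" using xs i by auto
    then show ?thesis using assms(1) i by auto
  qed
qed

lemma finite_paths:
  assumes "finite S" "E \<subseteq> S \<times> S" "acyclic E"
  shows "finite (paths E a b)"
proof -
  have "paths E a b \<subseteq> {xs. set xs \<subseteq> insert a S \<and> length xs \<le> card (insert a S)}"
  proof
    fix xs assume xs: "xs \<in> paths E a b"
    have "set xs \<subseteq> insert a S" using paths_subset[OF assms(2) xs] .
    moreover have "distinct xs" using paths_distinct[OF assms(3) xs] .
    ultimately show "xs \<in> {xs. set xs \<subseteq> insert a S \<and> length xs \<le> card (insert a S)}"
      using assms(1) by (metis (mono_tags) card_mono distinct_card finite_insert mem_Collect_eq)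
  qed
  then show ?thesis by (rule finite_subset) (simp add: finite_lists_length_le assms(1))
qed

lemma snoc_in_paths_iff:
  assumes "ys \<noteq> []"
  shows "ys @ [c] \<in> paths E a c \<longleftrightarrow> ys \<in> paths E a (last ys) \<and> (last ys, c) \<in> E"
proof -
  have split_last: "(\<forall>i < length ys. P i) \<longleftrightarrow> (\<forall>i < length ys - 1. P i) \<and> P (length ys - 1)"
    for P using assms by (metis One_nat_def Suc_pred length_greater_0_conv less_Suc_eq)
  have "((ys @ [c]) ! i, (ys @ [c]) ! Suc i) = (ys ! i, ys ! Suc i)" if "i < length ys - 1" for i
    using that by (auto simp: nth_append)
  moreover have "((ys @ [c]) ! (length ys - 1), (ys @ [c]) ! Suc (length ys - 1)) = (last ys, c)"
    using assms by (simp add: nth_append last_conv_nth)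
  ultimately have "(\<forall>i < length ys. ((ys @ [c]) ! i, (ys @ [c]) ! Suc i) \<in> E) \<longleftrightarrow>
      (\<forall>i < length ys - 1. (ys ! i, ys ! Suc i) \<in> E) \<and> (last ys, c) \<in> E"
    unfolding split_last by auto
  then show ?thesis using assms by (simp add: paths_def)
qed

lemma paths_self:
  assumes "acyclic E"
  shows "paths E a a = {[a]}"
proof
  show "{[a]} \<subseteq> paths E a a" by (simp add: paths_def)
  show "paths E a a \<subseteq> {[a]}"
  proof
    fix xs assume "xs \<in> paths E a a"
    then have xs: "xs \<noteq> []" "hd xs = a" "last xs = a"
      "\<forall>k < length xs - 1. (xs ! k, xs ! Suc k) \<in> E"
      by (auto simp: paths_def)
    have "length xs = 1"
    proof (rule ccontr)
      assume "length xs \<noteq> 1"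
      then have "0 < length xs - 1" using xs(1) by (cases xs) auto
      then have "(xs ! 0, xs ! (length xs - 1)) \<in> E\<^sup>+" using path_nth_trancl[OF xs(4)] by auto
      moreover have "xs ! 0 = a" "xs ! (length xs - 1) = a"
        using xs by (auto simp: hd_conv_nth last_conv_nth)
      ultimately show False using assms by (auto simp: acyclic_def)
    qed
    then show "xs \<in> {[a]}" using xs by (cases xs) auto
  qed
qed

lemma paths_by_last_edge:
  assumes "c \<noteq> a"
  shows "paths E a c = (\<Union>s \<in> {s. (s, c) \<in> E}. (\<lambda>p. p @ [c]) ` paths E a s)"
proof
  show "paths E a c \<subseteq> (\<Union>s \<in> {s. (s, c) \<in> E}. (\<lambda>p. p @ [c]) ` paths E a s)"
  proof
    fix xs assume xs: "xs \<in> paths E a c"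
    then have "xs \<noteq> []" "hd xs = a" "last xs = c" by (auto simp: paths_def)
    then have xs_eq: "xs = butlast xs @ [c]" by (metis append_butlast_last_id)
    then have "butlast xs \<noteq> []" using \<open>hd xs = a\<close> assms by (metis append_Nil list.sel(1))
    then have "butlast xs \<in> paths E a (last (butlast xs)) \<and> (last (butlast xs), c) \<in> E"
      using snoc_in_paths_iff xs xs_eq by metis
    then show "xs \<in> (\<Union>s \<in> {s. (s, c) \<in> E}. (\<lambda>p. p @ [c]) ` paths E a s)"
      using xs_eq by blast
  qed
  show "(\<Union>s \<in> {s. (s, c) \<in> E}. (\<lambda>p. p @ [c]) ` paths E a s) \<subseteq> paths E a c"
  proof
    fix xs assume "xs \<in> (\<Union>s \<in> {s. (s, c) \<in> E}. (\<lambda>p. p @ [c]) ` paths E a s)"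
    then obtain s p where sp: "(s, c) \<in> E" "p \<in> paths E a s" "xs = p @ [c]" by auto
    then have "p \<noteq> []" "last p = s" by (auto simp: paths_def)
    then show "xs \<in> paths E a c" using snoc_in_paths_iff sp by metis
  qed
qed

lemma path_prob_snoc:
  assumes "p \<noteq> []"
  shows "path_prob A (p @ [c]) = path_prob A p * A (last p) c"
proof -
  have len: "length (p @ [c]) - 1 = Suc (length p - 1)" using assms by simp
  have "path_prob A (p @ [c]) = (\<Prod>i < length p - 1. A ((p @ [c]) ! i) ((p @ [c]) ! Suc i))
      * A ((p @ [c]) ! (length p - 1)) ((p @ [c]) ! Suc (length p - 1))"
    unfolding path_prob_def len by simp
  also have "(\<Prod>i < length p - 1. A ((p @ [c]) ! i) ((p @ [c]) ! Suc i)) = path_prob A p"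
    unfolding path_prob_def by (rule prod.cong) (auto simp: nth_append)
  also have "A ((p @ [c]) ! (length p - 1)) ((p @ [c]) ! Suc (length p - 1)) = A (last p) c"
    using assms by (simp add: nth_append last_conv_nth)
  finally show ?thesis .
qed

lemma term_prob_self:
  assumes "acyclic E"
  shows "term_prob E A a a = 1"
  by (simp add: term_prob_def paths_self[OF assms] path_prob_def)

lemma term_prob_by_last_edge:
  assumes "finite S" "E \<subseteq> S \<times> S" "acyclic E" "c \<noteq> a"
  shows "term_prob E A a c = (\<Sum>s \<in> {s. (s, c) \<in> E}. term_prob E A a s * A s c)"
proof -
  have "{s. (s, c) \<in> E} \<subseteq> S" using assms(2) by auto
  then have fin: "finite {s. (s, c) \<in> E}" using assms(1) by (rule finite_subset)
  have "term_prob E A a c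
      = (\<Sum>s \<in> {s. (s, c) \<in> E}. sum (path_prob A) ((\<lambda>p. p @ [c]) ` paths E a s))"
    unfolding term_prob_def paths_by_last_edge[OF assms(4)]
  proof (rule sum.UNION_disjoint[OF fin])
    show "\<forall>s \<in> {s. (s, c) \<in> E}. finite ((\<lambda>p. p @ [c]) ` paths E a s)"
      using finite_paths[OF assms(1-3)] by blast
    show "\<forall>s \<in> {s. (s, c) \<in> E}. \<forall>s' \<in> {s. (s, c) \<in> E}. s \<noteq> s' \<longrightarrow>
        (\<lambda>p. p @ [c]) ` paths E a s \<inter> (\<lambda>p. p @ [c]) ` paths E a s' = {}"
      by (auto simp: paths_def)
  qed
  also have "\<dots> = (\<Sum>s \<in> {s. (s, c) \<in> E}. term_prob E A a s * A s c)"
  proof (rule sum.cong[OF refl])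
    fix s
    have "sum (path_prob A) ((\<lambda>p. p @ [c]) ` paths E a s)
        = (\<Sum>p \<in> paths E a s. path_prob A (p @ [c]))"
      by (subst sum.reindex) (auto simp: inj_on_def)
    also have "\<dots> = (\<Sum>p \<in> paths E a s. path_prob A p * A s c)"
      by (rule sum.cong) (auto simp: paths_def path_prob_snoc)
    finally show "sum (path_prob A) ((\<lambda>p. p @ [c]) ` paths E a s) = term_prob E A a s * A s c"
      by (simp add: term_prob_def sum_distrib_right)
  qed
  finally show ?thesis .
qed

definition bn_target :: "'a set \<Rightarrow> ('a \<times> 'a) set \<Rightarrow> ('a \<Rightarrow> real) \<Rightarrow> ('a \<Rightarrow> real) \<Rightarrow> 'a \<Rightarrow> real"
  where "bn_target S E R F s = (if s \<in> terminals S E then R s else F s)"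

lemma bn_loss_zero_imp_balanced:
  assumes "\<forall>x \<in> terminals S E. R x > 0" "\<forall>s \<in> S. F s > 0"
    and "\<forall>s \<in> S - {s0}. inflow E F A s > 0" "\<forall>s \<in> S - {s0}. bn_loss S E R F A s = 0"
  shows "\<forall>s \<in> S - {s0}. inflow E F A s = bn_target S E R F s"
proof
  fix s assume s: "s \<in> S - {s0}"
  have "bn_target S E R F s > 0" using s assms(1,2) by (simp add: bn_target_def)
  moreover have "inflow E F A s > 0" "bn_loss S E R F A s = 0" using s assms(3,4) by auto
  ultimately show "inflow E F A s = bn_target S E R F s" by (simp add: bn_loss_def bn_target_def)
qed

lemma term_prob_mult_source_flow:
  assumes "finite S" "E \<subseteq> S \<times> S" "acyclic E"
    and balanced: "\<forall>s \<in> S - {s0}. inflow E F A s = bn_target S E R F s"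
    and "s \<in> S" "s \<noteq> s0"
  shows "term_prob E A s0 s * F s0 = bn_target S E R F s"
proof -
  have wf: "wf E"
    using assms(1-3) by (intro finite_acyclic_wf) (auto intro: finite_subset)
  from wf assms(5,6) show ?thesis
  proof (induction s rule: wf_induct_rule)
    case (less s)
    have pred_flow: "term_prob E A s0 p * F s0 = F p" if "(p, s) \<in> E" for p
    proof -
      have "p \<in> S" "p \<notin> terminals S E" using that assms(2) by (auto simp: terminals_def)
      then show ?thesis
        using less.IH that term_prob_self[OF assms(3)] by (cases "p = s0") (auto simp: bn_target_def)
    qed
    have "term_prob E A s0 s * F s0 = (\<Sum>p \<in> {p. (p, s) \<in> E}. term_prob E A s0 p * F s0 * A p s)"
      unfolding term_prob_by_last_edge[OF assms(1-3) less.prems(2)] sum_distrib_right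
      by (simp add: ac_simps)
    also have "\<dots> = inflow E F A s"
      unfolding inflow_def using pred_flow by (intro sum.cong) auto
    finally show ?case using balanced less.prems by simp
  qed
qed

lemma sum_inflow_eq_sum_nonterminal_flow:
  assumes "finite S" "E \<subseteq> S \<times> S"
    and A_sum: "\<forall>s \<in> S - terminals S E. (\<Sum>s' \<in> {s'. (s, s') \<in> E}. A s s') = 1"
  shows "(\<Sum>s' \<in> S. inflow E F A s') = (\<Sum>s \<in> S - terminals S E. F s)"
proof -
  define h where "h s s' = (if (s, s') \<in> E then F s * A s s' else 0)" for s s'
  have inflow: "inflow E F A s' = (\<Sum>s \<in> S. h s s')" for s'
  proof -
    have "{s. (s, s') \<in> E} = {s \<in> S. (s, s') \<in> E}" using assms(2) by auto
    then show ?thesis unfolding inflow_def h_def using assms(1) by (simp add: sum.inter_filter)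
  qed
  have outflow: "(\<Sum>s' \<in> S. h s s') = (if s \<in> terminals S E then 0 else F s)" if "s \<in> S" for s
  proof -
    have "{s'. (s, s') \<in> E} = {s' \<in> S. (s, s') \<in> E}" using assms(2) by auto
    then have "(\<Sum>s' \<in> S. h s s') = F s * (\<Sum>s' \<in> {s'. (s, s') \<in> E}. A s s')"
      unfolding h_def using assms(1)
      by (simp add: sum.inter_filter sum_distrib_left if_distrib cong: if_cong)
    then show ?thesis using A_sum that by (auto simp: terminals_def)
  qed
  have "(\<Sum>s' \<in> S. inflow E F A s') = (\<Sum>s \<in> S. if s \<in> terminals S E then 0 else F s)"
    unfolding inflow by (subst sum.swap) (simp add: outflow)
  also have "\<dots> = (\<Sum>s \<in> S - terminals S E. F s)"
    using assms(1) by (simp add: sum.If_cases Diff_eq)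
  finally show ?thesis .
qed

lemma sum_reward_eq_source_outflow:
  assumes "finite S" "E \<subseteq> S \<times> S" "s0 \<in> S" "\<forall>p. (p, s0) \<notin> E"
    and A_sum: "\<forall>s \<in> S - terminals S E. (\<Sum>s' \<in> {s'. (s, s') \<in> E}. A s s') = 1"
    and balanced: "\<forall>s \<in> S - {s0}. inflow E F A s = bn_target S E R F s"
  shows "(\<Sum>x \<in> terminals S E - {s0}. R x) = (if s0 \<in> terminals S E then 0 else F s0)"
proof -
  have terminals_sub: "terminals S E \<subseteq> S" by (auto simp: terminals_def)
  have "inflow E F A s0 = 0" using assms(4) by (simp add: inflow_def)
  then have "(\<Sum>s \<in> S. inflow E F A s) = (\<Sum>s \<in> S - {s0}. bn_target S E R F s)"
    using assms(1,3) balanced by (simp add: sum.remove)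
  also have "\<dots> = (\<Sum>x \<in> terminals S E - {s0}. R x) + (\<Sum>s \<in> S - terminals S E - {s0}. F s)"
  proof -
    have "(S - {s0}) \<inter> {s. s \<in> terminals S E} = terminals S E - {s0}"
      "(S - {s0}) \<inter> - {s. s \<in> terminals S E} = S - terminals S E - {s0}"
      using terminals_sub by auto
    then show ?thesis unfolding bn_target_def using assms(1) by (simp add: sum.If_cases)
  qed
  finally have "(\<Sum>s \<in> S - terminals S E. F s)
      = (\<Sum>x \<in> terminals S E - {s0}. R x) + (\<Sum>s \<in> S - terminals S E - {s0}. F s)"
    using sum_inflow_eq_sum_nonterminal_flow[OF assms(1,2) A_sum] by simp
  moreover have "(\<Sum>s \<in> S - terminals S E. F s)
      = (if s0 \<in> terminals S E then 0 else F s0) + (\<Sum>s \<in> S - terminals S E - {s0}. F s)"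
    using assms(1,3) by (simp add: sum.remove)
  ultimately show ?thesis by linarith
qed

theorem theorem4p1:
  fixes S :: "'a set" and E :: "('a \<times> 'a) set" and s0 :: 'a
    and R F :: "'a \<Rightarrow> real" and A :: "'a \<Rightarrow> 'a \<Rightarrow> real"
  assumes finS: "finite S"
    and E_sub: "E \<subseteq> S \<times> S"
    and acyc: "acyclic E"
    and s0S: "s0 \<in> S"
    and source: "\<forall>s\<in>S. (\<forall>p. (p, s) \<notin> E) \<longleftrightarrow> s = s0"
    and R_pos: "\<forall>x\<in>terminals S E. R x > 0"
    and F_pos: "\<forall>s\<in>S. F s > 0"
    and A_nonneg: "\<forall>(s, s')\<in>E. A s s' \<ge> 0"
    and A_sum: "\<forall>s\<in>S - terminals S E. (\<Sum>s'\<in>{s'. (s, s') \<in> E}. A s s') = 1"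
    and inflow_pos: "\<forall>s'\<in>S - {s0}. inflow E F A s' > 0"
    and loss_zero: "\<forall>s'\<in>S - {s0}. bn_loss S E R F A s' = 0"
  shows "\<forall>x\<in>terminals S E.
           term_prob E A s0 x = R x / (\<Sum>y\<in>terminals S E. R y)"
proof
  fix x assume x: "x \<in> terminals S E"
  have balanced: "\<forall>s \<in> S - {s0}. inflow E F A s = bn_target S E R F s"
    using R_pos F_pos inflow_pos loss_zero by (rule bn_loss_zero_imp_balanced)
  have total: "(\<Sum>y \<in> terminals S E - {s0}. R y) = (if s0 \<in> terminals S E then 0 else F s0)"
    using sum_reward_eq_source_outflow[OF finS E_sub s0S _ A_sum balanced] source s0S by blast
  have fin_terminals: "finite (terminals S E)" using finS by (simp add: terminals_def)
  show "term_prob E A s0 x = R x / (\<Sum>y \<in> terminals S E. R y)"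
  proof (cases "s0 \<in> terminals S E")
    case True
    have "(\<Sum>y \<in> terminals S E - {s0}. R y) = 0" using True total by simp
    then have "\<forall>y \<in> terminals S E - {s0}. R y = 0"
      using fin_terminals R_pos by (subst (asm) sum_nonneg_eq_0_iff) (auto intro: less_imp_le)
    then have "y = s0" if "y \<in> terminals S E" for y
      using R_pos that by (metis DiffI less_irrefl singletonD)
    then have "terminals S E = {s0}" using True by blast
    then show ?thesis using x R_pos term_prob_self[OF acyc] by simp
  next
    case False
    then have "x \<noteq> s0" "(\<Sum>y \<in> terminals S E. R y) = F s0" using x total by auto
    moreover have "term_prob E A s0 x * F s0 = R x"
      using term_prob_mult_source_flow[OF finS E_sub acyc balanced, of x] x \<open>x \<noteq> s0\<close>
      by (simp add: bn_target_def terminals_def)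
    moreover have "F s0 > 0" using F_pos s0S by blast
    ultimately show ?thesis by (simp add: eq_divide_eq)
  qed
qed

end
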